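(* Let $Y$ be a solid vector space and $(X,d)$ a cone metric space over $Y$. Suppose $(x_n)$ is a sequence in $X$ with $d(x_n,x)\preceq b_n+\alpha\, d(y_n,y)+\beta\, d(z_n,z)$ for all $n$, where $x\in X$, $(b_n)$ is a sequence in $Y$ with $b_n\to0$, $(y_n)$ and $(z_n)$ are sequences in $X$ converging to $y$ and $z$ respectively, and $\alpha,\beta\ge0$ are real numbers. Then $x_n\to x$ in $X$.
   Context: Vector space with convergence: a real vector space $Y$ with a relation $\to$ between sequences in $Y$ and points of $Y$ (uniqueness of limits not assumed) such that (C1) $x_n\to x$, $y_n\to y$ imply $x_n+y_n\to x+y$; (C2) $x_n\to x$, $\lambda\in\mathbb R$ imply $\lambda x_n\to\lambda x$; (C3) $\lambda_n\to\lambda$ in $\mathbb R$ imply $\lambda_n x\to\lambda x$. $A\subseteq Y$ is open if $x_n\to x\in A$ implies $x_n\in A$ for all but finitely many $n$; closed if $x_n\to x$, $x_n\in A$ $\forall n$ imply $x\in A$; $A^\circ$ is the union of all open subsets of $A$. A cone is a nonempty closed $K$ with $\lambda K\subseteq K$ ($\lambda\ge0$), $K+K\subseteq K$, $K\cap(-K)=\{0\}$; solid if $K\ne\{0\}$, $K^\circ\ne\emptyset$. A vector ordering is a partial order $\preceq$ with (V1) $x\preceq y\Rightarrow x+z\preceq y+z$; (V2) $\lambda\ge0$, $x\preceq y\Rightarrow\lambda x\preceq\lambda y$; (V3) $x_n\to x$, $y_n\to y$, $x_n\preceq y_n$ $\forall n\Rightarrow x\preceq y$. Solid vector space: positive cone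 $K=\{x:x\succeq0\}$ solid, with $x\prec y$ iff $y-x\in K^\circ$. Cone metric space over $Y$: nonempty $X$ with $d\colon X\times X\to Y$, $d(x,y)\succeq0$, $d(x,y)=0$ iff $x=y$, $d(x,y)=d(y,x)$, $d(x,y)\preceq d(x,z)+d(z,y)$. Convergence in $X$: $x_n\to x$ iff for every $c\succ0$, $d(x_n,x)\prec c$ for all but finitely many $n$ (the topology with basis $U(x,r)=\{y:d(y,x)\prec r\}$, $r\succ 0$). *)

theory Defs
  imports Complex_Main
begin

definition vs_conv :: "((nat \<Rightarrow> 'a::real_vector) \<Rightarrow> 'a \<Rightarrow> bool) \<Rightarrow> bool" where
  "vs_conv conv \<longleftrightarrow>
     (\<forall>xs x ys y. conv xs x \<and> conv ys y \<longrightarrow> conv (\<lambda>n. xs n + ys n) (x + y)) \<and>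
     (\<forall>xs x (c::real). conv xs x \<longrightarrow> conv (\<lambda>n. c *\<^sub>R xs n) (c *\<^sub>R x)) \<and>
     (\<forall>(ls::nat \<Rightarrow> real) l x. ls \<longlonglongrightarrow> l \<longrightarrow> conv (\<lambda>n. ls n *\<^sub>R x) (l *\<^sub>R x))"

definition c_open :: "((nat \<Rightarrow> 'a) \<Rightarrow> 'a \<Rightarrow> bool) \<Rightarrow> 'a set \<Rightarrow> bool" where
  "c_open conv A \<longleftrightarrow> (\<forall>xs x. conv xs x \<and> x \<in> A \<longrightarrow> (\<forall>\<^sub>F n in sequentially. xs n \<in> A))"

definition c_closed :: "((nat \<Rightarrow> 'a) \<Rightarrow> 'a \<Rightarrow> bool) \<Rightarrow> 'a set \<Rightarrow> bool" where
  "c_closed conv A \<longleftrightarrow> (\<forall>xs x. conv xs x \<and> (\<forall>n. xs n \<in> A) \<longrightarrow> x \<in> A)"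

definition c_interior :: "((nat \<Rightarrow> 'a) \<Rightarrow> 'a \<Rightarrow> bool) \<Rightarrow> 'a set \<Rightarrow> 'a set" where
  "c_interior conv A = \<Union>{U. U \<subseteq> A \<and> c_open conv U}"

definition is_cone :: "((nat \<Rightarrow> 'a::real_vector) \<Rightarrow> 'a \<Rightarrow> bool) \<Rightarrow> 'a set \<Rightarrow> bool" where
  "is_cone conv K \<longleftrightarrow> K \<noteq> {} \<and> c_closed conv K \<and>
     (\<forall>(c::real) x. c \<ge> 0 \<and> x \<in> K \<longrightarrow> c *\<^sub>R x \<in> K) \<and>
     (\<forall>x y. x \<in> K \<and> y \<in> K \<longrightarrow> x + y \<in> K) \<and>
     K \<inter> uminus ` K = {0}"

definition solid_cone :: "((nat \<Rightarrow> 'a::real_vector) \<Rightarrow> 'a \<Rightarrow> bool) \<Rightarrow> 'a set \<Rightarrow> bool" where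
  "solid_cone conv K \<longleftrightarrow> is_cone conv K \<and> K \<noteq> {0} \<and> c_interior conv K \<noteq> {}"

definition vector_ordering ::
  "((nat \<Rightarrow> 'a::real_vector) \<Rightarrow> 'a \<Rightarrow> bool) \<Rightarrow> ('a \<Rightarrow> 'a \<Rightarrow> bool) \<Rightarrow> bool" where
  "vector_ordering conv le \<longleftrightarrow>
     (\<forall>x. le x x) \<and> (\<forall>x y. le x y \<and> le y x \<longrightarrow> x = y) \<and>
     (\<forall>x y z. le x y \<and> le y z \<longrightarrow> le x z) \<and>
     (\<forall>x y z. le x y \<longrightarrow> le (x + z) (y + z)) \<and>
     (\<forall>(c::real) x y. c \<ge> 0 \<and> le x y \<longrightarrow> le (c *\<^sub>R x) (c *\<^sub>R y)) \<and>
     (\<forall>xs x ys y. conv xs x \<and> conv ys y \<and> (\<forall>n. le (xs n) (ys n)) \<longrightarrow> le x y)"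

definition solid_vector_space ::
  "((nat \<Rightarrow> 'a::real_vector) \<Rightarrow> 'a \<Rightarrow> bool) \<Rightarrow> ('a \<Rightarrow> 'a \<Rightarrow> bool) \<Rightarrow> bool" where
  "solid_vector_space conv le \<longleftrightarrow> vs_conv conv \<and> vector_ordering conv le \<and>
     solid_cone conv {x. le 0 x}"

definition strict_lt ::
  "((nat \<Rightarrow> 'a::real_vector) \<Rightarrow> 'a \<Rightarrow> bool) \<Rightarrow> ('a \<Rightarrow> 'a \<Rightarrow> bool) \<Rightarrow> 'a \<Rightarrow> 'a \<Rightarrow> bool" where
  "strict_lt conv le x y \<longleftrightarrow> y - x \<in> c_interior conv {z. le 0 z}"

definition cone_metric :: "('a::real_vector \<Rightarrow> 'a \<Rightarrow> bool) \<Rightarrow> ('b \<Rightarrow> 'b \<Rightarrow> 'a) \<Rightarrow> bool" where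
  "cone_metric le d \<longleftrightarrow>
     (\<forall>x y. le 0 (d x y)) \<and> (\<forall>x y. d x y = 0 \<longleftrightarrow> x = y) \<and>
     (\<forall>x y. d x y = d y x) \<and> (\<forall>x y z. le (d x y) (d x z + d z y))"

definition cm_conv ::
  "((nat \<Rightarrow> 'a::real_vector) \<Rightarrow> 'a \<Rightarrow> bool) \<Rightarrow> ('a \<Rightarrow> 'a \<Rightarrow> bool) \<Rightarrow> ('b \<Rightarrow> 'b \<Rightarrow> 'a)
     \<Rightarrow> (nat \<Rightarrow> 'b) \<Rightarrow> 'b \<Rightarrow> bool" where
  "cm_conv conv le d xs x \<longleftrightarrow>
     (\<forall>c. strict_lt conv le 0 c \<longrightarrow> (\<forall>\<^sub>F n in sequentially. strict_lt conv le (d (xs n) x) c))"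

end

theory Submission
  imports Defs
begin

text \<open>Call a sequence \<open>u\<close> in \<open>Y\<close> null if \<open>u\<^sub>n \<prec> c\<close> eventually for every \<open>c \<succ> 0\<close>; convergence
  \<open>x\<^sub>n \<rightarrow> x\<close> in the cone metric space means exactly that \<open>d(x\<^sub>n, x)\<close> is null. Because the
  interior of the positive cone is open and stable under positive scaling and under translation
  by positive vectors, null sequences are closed under sums and nonnegative multiples, contain every sequence
  converging to \<open>0\<close> in \<open>Y\<close>, and are closed downwards under \<open>\<preceq>\<close>; the hypothesis bounds
  \<open>d(x\<^sub>n, x)\<close> by a nonnegative combination of null sequences.\<close>

definition cone_null :: "((nat \<Rightarrow> 'a::real_vector) \<Rightarrow> 'a \<Rightarrow> bool) \<Rightarrow> ('a \<Rightarrow> 'a \<Rightarrow> bool)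
    \<Rightarrow> (nat \<Rightarrow> 'a) \<Rightarrow> bool" where
  "cone_null conv le u \<longleftrightarrow>
     (\<forall>c. strict_lt conv le 0 c \<longrightarrow> (\<forall>\<^sub>F n in sequentially. strict_lt conv le (u n) c))"

lemma cm_conv_iff_cone_null: "cm_conv conv le d xs x \<longleftrightarrow> cone_null conv le (\<lambda>n. d (xs n) x)"
  unfolding cm_conv_def cone_null_def ..

lemma c_interior_subset: "c_interior conv A \<subseteq> A"
  unfolding c_interior_def by blast

lemma c_interior_maximal: "U \<subseteq> A \<Longrightarrow> c_open conv U \<Longrightarrow> U \<subseteq> c_interior conv A"
  unfolding c_interior_def by blast

lemma c_open_c_interior: "c_open conv (c_interior conv A)"
  unfolding c_open_def
proof (intro allI impI)
  fix xs x assume "conv xs x \<and> x \<in> c_interior conv A"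
  then obtain U where "conv xs x" "x \<in> U" "U \<subseteq> A" "c_open conv U"
    unfolding c_interior_def by blast
  then have "\<forall>\<^sub>F n in sequentially. xs n \<in> U" unfolding c_open_def by blast
  then show "\<forall>\<^sub>F n in sequentially. xs n \<in> c_interior conv A"
    by (rule eventually_mono) (use \<open>U \<subseteq> A\<close> \<open>c_open conv U\<close> in \<open>auto simp: c_interior_def\<close>)
qed

locale ordered_convergence_space =
  fixes conv :: "(nat \<Rightarrow> 'a::real_vector) \<Rightarrow> 'a \<Rightarrow> bool"
    and le :: "'a \<Rightarrow> 'a \<Rightarrow> bool"
  assumes vs_conv: "vs_conv conv"
    and ordering: "vector_ordering conv le"
begin

abbreviation pos_interior :: "'a set" where
  "pos_interior \<equiv> c_interior conv {z. le 0 z}"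

lemma conv_add: "conv xs x \<Longrightarrow> conv ys y \<Longrightarrow> conv (\<lambda>n. xs n + ys n) (x + y)"
  using vs_conv unfolding vs_conv_def by blast

lemma conv_scaleR: "conv xs x \<Longrightarrow> conv (\<lambda>n. c *\<^sub>R xs n) (c *\<^sub>R x)"
  using vs_conv unfolding vs_conv_def by blast

lemma conv_const: "conv (\<lambda>n. a) a"
proof -
  have "conv (\<lambda>n. (\<lambda>n. 1::real) n *\<^sub>R a) (1 *\<^sub>R a)"
    using vs_conv tendsto_const[of "1::real" sequentially] unfolding vs_conv_def by blast
  then show ?thesis by simp
qed

lemma c_open_translation:
  assumes "c_open conv U"
  shows "c_open conv ((\<lambda>v. v + u) ` U)"
  unfolding c_open_def
proof (intro allI impI)
  fix xs w assume "conv xs w \<and> w \<in> (\<lambda>v. v + u) ` U"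
  then obtain v where "conv xs w" "v \<in> U" "w = v + u" by blast
  then have "conv (\<lambda>n. xs n + - u) v"
    using conv_add[of xs w "\<lambda>n. - u" "- u"] conv_const by simp
  then have "\<forall>\<^sub>F n in sequentially. xs n + - u \<in> U"
    using assms \<open>v \<in> U\<close> unfolding c_open_def by blast
  then show "\<forall>\<^sub>F n in sequentially. xs n \<in> (\<lambda>v. v + u) ` U"
    by (rule eventually_mono) (rule rev_image_eqI, auto)
qed

lemma c_open_scaleR:
  assumes "c_open conv U" "c > 0"
  shows "c_open conv ((\<lambda>v. c *\<^sub>R v) ` U)"
  unfolding c_open_def
proof (intro allI impI)
  fix xs w assume "conv xs w \<and> w \<in> (\<lambda>v. c *\<^sub>R v) ` U"
  then obtain v where "conv xs w" "v \<in> U" "w = c *\<^sub>R v" by blast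
  then have "conv (\<lambda>n. inverse c *\<^sub>R xs n) v"
    using conv_scaleR[of xs w "inverse c"] \<open>c > 0\<close> by simp
  then have "\<forall>\<^sub>F n in sequentially. inverse c *\<^sub>R xs n \<in> U"
    using assms \<open>v \<in> U\<close> unfolding c_open_def by blast
  then show "\<forall>\<^sub>F n in sequentially. xs n \<in> (\<lambda>v. c *\<^sub>R v) ` U"
    by (rule eventually_mono) (rule rev_image_eqI, use \<open>c > 0\<close> in auto)
qed

lemma le_trans: "le x y \<Longrightarrow> le y z \<Longrightarrow> le x z"
  using ordering unfolding vector_ordering_def by blast

lemma le_add_right: "le x y \<Longrightarrow> le (x + z) (y + z)"
  using ordering unfolding vector_ordering_def by blast

lemma le_scaleR: "le x y \<Longrightarrow> c \<ge> 0 \<Longrightarrow> le (c *\<^sub>R x) (c *\<^sub>R y)"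
  using ordering unfolding vector_ordering_def by blast

lemma nonneg_add: "le 0 p \<Longrightarrow> le 0 q \<Longrightarrow> le 0 (p + q)"
  using le_trans[of 0 q "p + q"] le_add_right[of 0 p q] by simp

lemma nonneg_scaleR: "le 0 p \<Longrightarrow> c \<ge> 0 \<Longrightarrow> le 0 (c *\<^sub>R p)"
  using le_scaleR[of 0 p c] by simp

lemma nonneg_diff_of_le: "le x y \<Longrightarrow> le 0 (y - x)"
  using le_add_right[of x y "- x"] by simp

lemma pos_interior_add_nonneg:
  assumes "p \<in> pos_interior" "le 0 q"
  shows "p + q \<in> pos_interior"
proof -
  have "le 0 (v + q)" if "v \<in> pos_interior" for v
  proof -
    have "le 0 v" using that c_interior_subset[of conv "{z. le 0 z}"] by blast
    then show ?thesis using nonneg_add \<open>le 0 q\<close> by blast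
  qed
  then have "(\<lambda>v. v + q) ` pos_interior \<subseteq> {z. le 0 z}" by blast
  moreover have "c_open conv ((\<lambda>v. v + q) ` pos_interior)"
    by (rule c_open_translation[OF c_open_c_interior])
  ultimately have "(\<lambda>v. v + q) ` pos_interior \<subseteq> pos_interior"
    by (rule c_interior_maximal)
  then show ?thesis using assms(1) by blast
qed

lemma pos_interior_scaleR:
  assumes "p \<in> pos_interior" "c > 0"
  shows "c *\<^sub>R p \<in> pos_interior"
proof -
  have "le 0 (c *\<^sub>R v)" if "v \<in> pos_interior" for v
  proof -
    have "le 0 v" using that c_interior_subset[of conv "{z. le 0 z}"] by blast
    then show ?thesis using nonneg_scaleR \<open>c > 0\<close> by simp
  qed
  then have "(\<lambda>v. c *\<^sub>R v) ` pos_interior \<subseteq> {z. le 0 z}" by blast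
  moreover have "c_open conv ((\<lambda>v. c *\<^sub>R v) ` pos_interior)"
    by (rule c_open_scaleR[OF c_open_c_interior \<open>c > 0\<close>])
  ultimately have "(\<lambda>v. c *\<^sub>R v) ` pos_interior \<subseteq> pos_interior"
    by (rule c_interior_maximal)
  then show ?thesis using assms(1) by blast
qed

lemma strict_lt_iff: "strict_lt conv le x y \<longleftrightarrow> y - x \<in> pos_interior"
  unfolding strict_lt_def ..

lemma le_strict_lt_trans:
  assumes "le u v" "strict_lt conv le v c"
  shows "strict_lt conv le u c"
proof -
  have "(c - v) + (v - u) \<in> pos_interior"
    using assms pos_interior_add_nonneg nonneg_diff_of_le unfolding strict_lt_iff by blast
  then show ?thesis unfolding strict_lt_iff by simp
qed

lemma strict_lt_add:
  assumes "strict_lt conv le u a" "strict_lt conv le v b"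
  shows "strict_lt conv le (u + v) (a + b)"
proof -
  have "le 0 (b - v)"
    using assms(2) c_interior_subset[of conv "{z. le 0 z}"] unfolding strict_lt_iff by blast
  then have "(a - u) + (b - v) \<in> pos_interior"
    using assms(1) pos_interior_add_nonneg unfolding strict_lt_iff by blast
  then show ?thesis unfolding strict_lt_iff by (simp add: algebra_simps)
qed

lemma strict_lt_scaleR:
  assumes "strict_lt conv le u a" "c > 0"
  shows "strict_lt conv le (c *\<^sub>R u) (c *\<^sub>R a)"
proof -
  have "c *\<^sub>R (a - u) \<in> pos_interior"
    using assms pos_interior_scaleR unfolding strict_lt_iff by blast
  then show ?thesis unfolding strict_lt_iff by (simp add: scaleR_diff_right)
qed

lemma cone_null_of_conv_zero:
  assumes "conv u 0"
  shows "cone_null conv le u"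
  unfolding cone_null_def
proof (intro allI impI)
  fix c assume "strict_lt conv le 0 c"
  then have "c \<in> pos_interior" by (simp add: strict_lt_iff)
  moreover have "conv (\<lambda>n. c - u n) c"
    using conv_add[OF conv_const conv_scaleR[OF assms, of "-1"], of c] by simp
  ultimately have "\<forall>\<^sub>F n in sequentially. c - u n \<in> pos_interior"
    using c_open_c_interior[of conv "{z. le 0 z}"] unfolding c_open_def by blast
  then show "\<forall>\<^sub>F n in sequentially. strict_lt conv le (u n) c"
    by (simp add: strict_lt_iff)
qed

lemma cone_null_le:
  assumes "\<And>n. le (u n) (v n)" "cone_null conv le v"
  shows "cone_null conv le u"
  unfolding cone_null_def
proof (intro allI impI)
  fix c assume "strict_lt conv le 0 c"
  with assms(2) have "\<forall>\<^sub>F n in sequentially. strict_lt conv le (v n) c"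
    unfolding cone_null_def by blast
  then show "\<forall>\<^sub>F n in sequentially. strict_lt conv le (u n) c"
    by (rule eventually_mono) (rule le_strict_lt_trans[OF assms(1)])
qed

lemma cone_null_add:
  assumes "cone_null conv le u" "cone_null conv le v"
  shows "cone_null conv le (\<lambda>n. u n + v n)"
  unfolding cone_null_def
proof (intro allI impI)
  fix c assume "strict_lt conv le 0 c"
  then have "strict_lt conv le 0 ((1/2) *\<^sub>R c)"
    using strict_lt_scaleR[of 0 c "1/2"] by simp
  then have "\<forall>\<^sub>F n in sequentially. strict_lt conv le (u n) ((1/2) *\<^sub>R c)"
      "\<forall>\<^sub>F n in sequentially. strict_lt conv le (v n) ((1/2) *\<^sub>R c)"
    using assms unfolding cone_null_def by blast+
  then show "\<forall>\<^sub>F n in sequentially. strict_lt conv le (u n + v n) c"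
  proof eventually_elim
    case (elim n)
    have "(1/2) *\<^sub>R c + (1/2) *\<^sub>R c = c" by (simp flip: scaleR_left_distrib)
    with strict_lt_add[OF elim] show ?case by simp
  qed
qed

lemma cone_null_scaleR:
  assumes "cone_null conv le u" "\<alpha> \<ge> 0"
  shows "cone_null conv le (\<lambda>n. \<alpha> *\<^sub>R u n)"
proof (cases "\<alpha> = 0")
  case True
  then show ?thesis unfolding cone_null_def by simp
next
  case False
  with \<open>\<alpha> \<ge> 0\<close> have "\<alpha> > 0" by simp
  show ?thesis unfolding cone_null_def
  proof (intro allI impI)
    fix c assume "strict_lt conv le 0 c"
    then have "strict_lt conv le 0 (inverse \<alpha> *\<^sub>R c)"
      using strict_lt_scaleR[of 0 c "inverse \<alpha>"] \<open>\<alpha> > 0\<close> by simp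
    then have "\<forall>\<^sub>F n in sequentially. strict_lt conv le (u n) (inverse \<alpha> *\<^sub>R c)"
      using assms(1) unfolding cone_null_def by blast
    then show "\<forall>\<^sub>F n in sequentially. strict_lt conv le (\<alpha> *\<^sub>R u n) c"
    proof (rule eventually_mono)
      fix n assume "strict_lt conv le (u n) (inverse \<alpha> *\<^sub>R c)"
      from strict_lt_scaleR[OF this \<open>\<alpha> > 0\<close>] \<open>\<alpha> > 0\<close>
      show "strict_lt conv le (\<alpha> *\<^sub>R u n) c" by simp
    qed
  qed
qed

end

theorem theorem9p16:
  fixes conv :: "(nat \<Rightarrow> 'a::real_vector) \<Rightarrow> 'a \<Rightarrow> bool"
    and le :: "'a \<Rightarrow> 'a \<Rightarrow> bool"
    and d :: "'b \<Rightarrow> 'b \<Rightarrow> 'a"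
    and xs ys zs :: "nat \<Rightarrow> 'b" and x y z :: 'b
    and b :: "nat \<Rightarrow> 'a" and \<alpha> \<beta> :: real
  assumes "solid_vector_space conv le"
    and "cone_metric le d"
    and "\<And>n. le (d (xs n) x) (b n + \<alpha> *\<^sub>R d (ys n) y + \<beta> *\<^sub>R d (zs n) z)"
    and "conv b 0"
    and "cm_conv conv le d ys y"
    and "cm_conv conv le d zs z"
    and "\<alpha> \<ge> 0" and "\<beta> \<ge> 0"
  shows "cm_conv conv le d xs x"
proof -
  interpret ordered_convergence_space conv le
    using assms(1) by unfold_locales (simp_all add: solid_vector_space_def)
  have "cone_null conv le (\<lambda>n. \<alpha> *\<^sub>R d (ys n) y)" "cone_null conv le (\<lambda>n. \<beta> *\<^sub>R d (zs n) z)"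
    using assms(5-8) by (simp_all add: cm_conv_iff_cone_null cone_null_scaleR)
  then have "cone_null conv le (\<lambda>n. b n + \<alpha> *\<^sub>R d (ys n) y + \<beta> *\<^sub>R d (zs n) z)"
    using cone_null_of_conv_zero[OF assms(4)] by (intro cone_null_add)
  then show ?thesis
    unfolding cm_conv_iff_cone_null by (rule cone_null_le[OF assms(3)])
qed

end
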